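(* Let $R=\mathbb{K}[x_{i,i+1},x_{i,i+2}: i\in\mathbb{N}]$, $\varphi:R\to\mathbb{K}[x_i:i\in\mathbb{N}]$ with $\varphi(x_{i,i+1})=x_ix_{i+1}$, $\varphi(x_{i,i+2})=x_ix_{i+2}$, and $I=\ker\varphi$. Let $g=\prod x_{i,j}^{u_{i,j}}-\prod x_{i,j}^{v_{i,j}}\in I$ be a binomial that is not a multiple of any variable, and let $c$ be the smallest vertex adjacent to $g$. Then $w_g([c,c+1])=-w_g([c,c+2])\ne0$.
   Context: $\mathbb{K}$ is a field. $E=\{[i,i+1],[i,i+2]:i\in\mathbb{N}\}$, $w_g([i,j])=u_{i,j}-v_{i,j}$ for $[i,j]\in E$; a vertex $n\in\mathbb{N}$ is adjacent to $g$ if $n\in\{i,j\}$ for some $[i,j]\in E$ with $w_g([i,j])\ne0$ (the statement presupposes such a vertex exists). *)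

theory Defs
  imports Main "HOL-Library.Poly_Mapping"
begin

text \<open>E [i,i+1], [i,i+2] of the graph; the variable x_{i,j} is indexed by the pair (i,j).\<close>
definition Edges :: "(nat \<times> nat) set" where
  "Edges = {(i, i+1) | i. True} \<union> {(i, i+2) | i. True}"

text \<open>Polynomials: finitely supported maps from monomials (exponent vectors) to coefficients.\<close>
type_synonym 'k polyE = "((nat \<times> nat) \<Rightarrow>\<^sub>0 nat) \<Rightarrow>\<^sub>0 'k"
type_synonym 'k polyV = "(nat \<Rightarrow>\<^sub>0 nat) \<Rightarrow>\<^sub>0 'k"

definition R :: "'k::field polyE set" where
  "R = {p :: 'k polyE. \<forall>m \<in> Poly_Mapping.keys p. Poly_Mapping.keys m \<subseteq> Edges}"

definition monomE :: "((nat \<times> nat) \<Rightarrow>\<^sub>0 nat) \<Rightarrow> 'k::field polyE" where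
  "monomE m = Poly_Mapping.single m 1"

definition varE :: "nat \<times> nat \<Rightarrow> 'k::field polyE" where
  "varE e = monomE (Poly_Mapping.single e 1)"

text \<open>Image of a monomial: x_{i,j} \<mapsto> x_i x_j.\<close>
definition phi_mon :: "((nat \<times> nat) \<Rightarrow>\<^sub>0 nat) \<Rightarrow> (nat \<Rightarrow>\<^sub>0 nat)" where
  "phi_mon m = (\<Sum>e \<in> Poly_Mapping.keys m. Poly_Mapping.single (fst e) (Poly_Mapping.lookup m e)
                               + Poly_Mapping.single (snd e) (Poly_Mapping.lookup m e))"

definition phi :: "'k::field polyE \<Rightarrow> 'k polyV" where
  "phi p = (\<Sum>m \<in> Poly_Mapping.keys p. Poly_Mapping.single (phi_mon m) (Poly_Mapping.lookup p m))"

definition kerI :: "'k::field polyE set" where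
  "kerI = {p \<in> R. phi p = 0}"

definition wg :: "((nat \<times> nat) \<Rightarrow>\<^sub>0 nat) \<Rightarrow> ((nat \<times> nat) \<Rightarrow>\<^sub>0 nat) \<Rightarrow> nat \<times> nat \<Rightarrow> int" where
  "wg u v e = int (Poly_Mapping.lookup u e) - int (Poly_Mapping.lookup v e)"

definition adjacent :: "((nat \<times> nat) \<Rightarrow>\<^sub>0 nat) \<Rightarrow> ((nat \<times> nat) \<Rightarrow>\<^sub>0 nat) \<Rightarrow> nat \<Rightarrow> bool" where
  "adjacent u v n \<longleftrightarrow> (\<exists>e \<in> Edges. (n = fst e \<or> n = snd e) \<and> wg u v e \<noteq> 0)"

end

theory Submission
  imports Defs
begin

text \<open>Since \<open>\<phi>\<close> maps \<open>x\<^sub>i\<^sub>j\<close> to \<open>x\<^sub>i x\<^sub>j\<close>, the exponent of \<open>x\<^sub>n\<close> in \<open>\<phi>(x\<^sup>u)\<close> is the weighted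
  degree of vertex \<open>n\<close> in the multigraph \<open>u\<close>. A binomial \<open>x\<^sup>u - x\<^sup>v\<close> lies in the kernel only if
  \<open>\<phi>(x\<^sup>u) = \<phi>(x\<^sup>v)\<close>, so the weights \<open>w\<^sub>g\<close> sum to zero around every vertex. At the least vertex \<open>c\<close>
  adjacent to \<open>g\<close>, all edges of nonzero weight go upwards, i.e. are \<open>[c,c+1]\<close> or \<open>[c,c+2]\<close>;
  the balance at \<open>c\<close> is therefore \<open>w\<^sub>g([c,c+1]) + w\<^sub>g([c,c+2]) = 0\<close>, and adjacency of \<open>c\<close> makes
  one, hence both, of them nonzero.\<close>

lemma lookup_phi_mon:
  assumes "finite T" "Poly_Mapping.keys m \<subseteq> T"
  shows "int (Poly_Mapping.lookup (phi_mon m) n) =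
    (\<Sum>e\<in>T. (if fst e = n then int (Poly_Mapping.lookup m e) else 0)
          + (if snd e = n then int (Poly_Mapping.lookup m e) else 0))"
proof -
  have "int (Poly_Mapping.lookup (phi_mon m) n) =
    (\<Sum>e\<in>Poly_Mapping.keys m. (if fst e = n then int (Poly_Mapping.lookup m e) else 0)
          + (if snd e = n then int (Poly_Mapping.lookup m e) else 0))"
    unfolding phi_mon_def lookup_sum lookup_add lookup_single of_nat_sum
    by (intro sum.cong) (auto simp: when_def)
  also have "\<dots> = (\<Sum>e\<in>T. (if fst e = n then int (Poly_Mapping.lookup m e) else 0)
          + (if snd e = n then int (Poly_Mapping.lookup m e) else 0))"
    using assms by (intro sum.mono_neutral_left) (auto simp: in_keys_iff)
  finally show ?thesis .
qed

lemma phi_mon_eq_imp_weight_balance: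
  assumes "phi_mon u = phi_mon v" "finite T"
    and "Poly_Mapping.keys u \<subseteq> T" "Poly_Mapping.keys v \<subseteq> T"
  shows "(\<Sum>e\<in>T. (if fst e = n then wg u v e else 0) + (if snd e = n then wg u v e else 0)) = 0"
proof -
  have "(\<Sum>e\<in>T. (if fst e = n then wg u v e else 0) + (if snd e = n then wg u v e else 0))
      = int (Poly_Mapping.lookup (phi_mon u) n) - int (Poly_Mapping.lookup (phi_mon v) n)"
    unfolding lookup_phi_mon[OF assms(2,3)] lookup_phi_mon[OF assms(2,4)] sum_subtractf[symmetric]
    by (intro sum.cong) (auto simp: wg_def)
  then show ?thesis
    using assms(1) by simp
qed

lemma phi_binomial_eq_0_imp_phi_mon_eq:
  assumes "u \<noteq> v" "phi (monomE u - monomE v :: 'k::field polyE) = 0"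
  shows "phi_mon u = phi_mon v"
proof (rule ccontr)
  assume ne: "phi_mon u \<noteq> phi_mon v"
  define g :: "'k polyE" where "g = monomE u - monomE v"
  have lookup_g: "Poly_Mapping.lookup g m = (if m = u then 1 else if m = v then -1 else 0)" for m
    using assms(1) unfolding g_def monomE_def by (auto simp: lookup_minus lookup_single when_def)
  then have "Poly_Mapping.keys g = {u, v}"
    by (auto simp: in_keys_iff split: if_splits)
  then have "Poly_Mapping.lookup (phi g) (phi_mon u) = 1"
    unfolding phi_def lookup_sum using assms(1) ne by (simp add: lookup_g lookup_single when_def)
  then show False
    using assms(2) unfolding g_def by simp
qed

lemma ex_adjacent:
  assumes "u \<noteq> v" "Poly_Mapping.keys u \<subseteq> Edges" "Poly_Mapping.keys v \<subseteq> Edges"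
  shows "\<exists>n. adjacent u v n"
proof -
  obtain e where e: "Poly_Mapping.lookup u e \<noteq> Poly_Mapping.lookup v e"
    using assms(1) by (meson poly_mapping_eqI)
  then have "e \<in> Poly_Mapping.keys u \<union> Poly_Mapping.keys v"
    by (auto simp: in_keys_iff)
  then have "e \<in> Edges"
    using assms(2,3) by blast
  with e show ?thesis
    unfolding adjacent_def wg_def by auto
qed

lemma edge_at_least_adjacent:
  assumes "e \<in> Edges" "wg u v e \<noteq> 0" "c = fst e \<or> c = snd e"
    and least: "\<And>n. adjacent u v n \<Longrightarrow> c \<le> n"
  shows "e = (c, c+1) \<or> e = (c, c+2)"
proof -
  obtain i where i: "e = (i, i+1) \<or> e = (i, i+2)"
    using assms(1) unfolding Edges_def by auto
  have "adjacent u v i"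
    using assms(1,2) i unfolding adjacent_def by force
  then have "c \<le> i"
    by (rule least)
  with i assms(3) show ?thesis
    by auto
qed

lemma weight_balance_at_least_adjacent:
  assumes "phi_mon u = phi_mon v"
    and "Poly_Mapping.keys u \<subseteq> Edges" "Poly_Mapping.keys v \<subseteq> Edges"
    and least: "\<And>n. adjacent u v n \<Longrightarrow> c \<le> n"
  shows "wg u v (c, c+1) + wg u v (c, c+2) = 0"
proof -
  define up where "up = {(c, c+1), (c, c+2)}"
  define T where "T = Poly_Mapping.keys u \<union> Poly_Mapping.keys v \<union> up"
  let ?incident = "\<lambda>e. (if fst e = c then wg u v e else 0) + (if snd e = c then wg u v e else 0)"
  have "finite T"
    unfolding T_def up_def by simp
  have T_Edges: "T \<subseteq> Edges"
    using assms(2,3) unfolding T_def up_def Edges_def by auto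
  have outside_up: "?incident e = 0" if "e \<in> T - up" for e
  proof (cases "wg u v e = 0")
    case False
    have "c \<noteq> fst e \<and> c \<noteq> snd e"
      using edge_at_least_adjacent[of e u v c] T_Edges that False least
      unfolding up_def by blast
    then show ?thesis
      by auto
  qed simp
  have "up \<subseteq> T"
    unfolding T_def by blast
  then have "sum ?incident T = sum ?incident up"
    using \<open>finite T\<close> outside_up by (intro sum.mono_neutral_right) blast+
  also have "\<dots> = wg u v (c, c+1) + wg u v (c, c+2)"
    unfolding up_def by simp
  finally have "sum ?incident T = wg u v (c, c+1) + wg u v (c, c+2)" .
  moreover have "sum ?incident T = 0"
    using assms(1) \<open>finite T\<close> by (rule phi_mon_eq_imp_weight_balance) (auto simp: T_def)
  ultimately show ?thesis
    by simp
qed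

theorem corollary6p2:
  fixes u v :: "(nat \<times> nat) \<Rightarrow>\<^sub>0 nat" and g :: "'k::field polyE" and c :: nat
  assumes "Poly_Mapping.keys u \<subseteq> Edges" and "Poly_Mapping.keys v \<subseteq> Edges"
    and "g = monomE u - monomE v"
    and "g \<in> kerI"
    and "\<not> (\<exists>e \<in> Edges. \<exists>h \<in> R. g = varE e * h)"
    and "c = (LEAST n. adjacent u v n)"
  shows "wg u v (c, c+1) = - wg u v (c, c+2) \<and> wg u v (c, c+1) \<noteq> 0"
proof -
  have "u \<noteq> v"
  proof
    assume "u = v"
    then have "g = varE (0, 1) * 0"
      using assms(3) by simp
    moreover have "(0, 1) \<in> Edges" "0 \<in> R"
      unfolding Edges_def R_def by auto
    ultimately show False
      using assms(5) by blast
  qed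
  have "phi (monomE u - monomE v :: 'k polyE) = 0"
    using assms(3,4) by (simp add: kerI_def)
  then have "phi_mon u = phi_mon v"
    by (rule phi_binomial_eq_0_imp_phi_mon_eq[OF \<open>u \<noteq> v\<close>])
  have least: "c \<le> n" if "adjacent u v n" for n
    using that assms(6) by (simp add: Least_le)
  have balance: "wg u v (c, c+1) + wg u v (c, c+2) = 0"
    by (rule weight_balance_at_least_adjacent[OF \<open>phi_mon u = phi_mon v\<close> assms(1,2) least])
  have "adjacent u v c"
    using LeastI_ex[OF ex_adjacent[OF \<open>u \<noteq> v\<close> assms(1,2)]] assms(6) by simp
  then obtain e where e: "e \<in> Edges" "wg u v e \<noteq> 0" "c = fst e \<or> c = snd e"
    unfolding adjacent_def by auto
  then have "wg u v (c, c+1) \<noteq> 0 \<or> wg u v (c, c+2) \<noteq> 0"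
    using edge_at_least_adjacent[OF e least] by auto
  with balance show ?thesis
    by auto
qed

end
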